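(* Let $n\ge1$ be an integer and let $c_0,g_2,g_3$ be arbitrary constants. Let $C(p)=-n(n+1)p+c_0$ and let $A(p)=\sum_{i=0}^{n}a_ip^i$ be a polynomial with $a_n=1$. Then $A$ satisfies the polynomial identity $$(4p^{3}-g_2p-g_3)A'''(p)+\left(18p^{2}-\tfrac{3g_2}{2}\right)A''(p)+4(3p+C(p))A'(p)+2A(p)C'(p)=0$$ if and only if its coefficients are given by $$a_{n-1}=\frac{c_0}{2n-1},\qquad a_{n-2}=\frac{\left(8c_0^{2}-ng_2(2n-1)^{2}\right)(n-1)}{8(2n-3)(2n-1)^{2}}\ \ (\text{for } n\ge2),$$ and, for $i=n-3,n-4,\ldots,0$, $$a_i=\frac{\left((2i^{2}+10i+12)a_{i+3}g_3+(2i^{2}+7i+6)a_{i+2}g_2-8c_0a_{i+1}\right)(i+1)}{4(i+n+1)(2i+1)(i-n)}.$$ In particular, for all values of $c_0,g_2,g_3$, the function $z(x)=A(\wp(x))$ is a solution of the Lie equation $z'''+4wz'+2w'z=0$ for the potential $w(x)=-n(n+1)\wp(x)+c_0$, where $\wp$ is the Weierstrass function with invariants $g_2,g_3$.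
   Context: The Weierstrass function $\wp(x)$ satisfies $(\wp')^2=4\wp^3-g_2\wp-g_3$ with invariants $g_2,g_3$. For a potential $w(x)=C(\wp(x))$ and a candidate symmetry $z(x)=A(\wp(x))$ with $C,A$ polynomials, substituting into the Lie equation $z'''+4wz'+2w'z=0$ and using the Weierstrass ODE, the Lie equation becomes $\wp'(x)$ times the displayed polynomial expression evaluated at $p=\wp(x)$; so $z$ is a symmetry exactly when the displayed polynomial identity in $p$ holds. *)

theory Defs
  imports "HOL-Analysis.Analysis" "HOL-Computational_Algebra.Polynomial"
begin

definition potC :: "nat \<Rightarrow> complex \<Rightarrow> complex poly" where
  "potC n c0 = [: c0, - (of_nat n * (of_nat n + 1)) :]"

definition lie_expr :: "complex \<Rightarrow> complex \<Rightarrow> complex poly \<Rightarrow> complex poly \<Rightarrow> complex \<Rightarrow> complex" where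
  "lie_expr g2 g3 C A p =
     (4 * p ^ 3 - g2 * p - g3) * poly (pderiv (pderiv (pderiv A))) p
   + (18 * p ^ 2 - 3 * g2 / 2) * poly (pderiv (pderiv A)) p
   + 4 * (3 * p + poly C p) * poly (pderiv A) p
   + 2 * poly A p * poly (pderiv C) p"

end

theory Submission
  imports Defs "HOL-Complex_Analysis.Cauchy_Integral_Formula"
begin

text \<open>
  The Lie expression is a polynomial in \<open>p\<close>, so it vanishes identically iff all its
  coefficients do. For \<open>C = potC n c0\<close> the \<open>k\<close>-th coefficient is
  \<open>2(2k+1)(k-n)(k+n+1) a\<^sub>k\<close> plus a combination of \<open>a\<^sub>k\<^sub>+\<^sub>1, a\<^sub>k\<^sub>+\<^sub>2, a\<^sub>k\<^sub>+\<^sub>3\<close>.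
  It vanishes automatically for \<open>k \<ge> n\<close>, while for \<open>k < n\<close> the factor in front of \<open>a\<^sub>k\<close>
  is nonzero, so the equation determines \<open>a\<^sub>k\<close> from the higher coefficients; for
  \<open>k = n-1\<close> and \<open>k = n-2\<close> these are known, which gives the closed forms.

  By the chain rule, \<open>\<wp>'' = 6\<wp>\<^sup>2 - g\<^sub>2/2\<close> and \<open>\<wp>'\<^sup>2 = 4\<wp>\<^sup>3 - g\<^sub>2\<wp> - g\<^sub>3\<close>, the Lie
  operator applied to \<open>A \<circ> \<wp>\<close> equals \<open>\<wp>'\<close> times the Lie expression evaluated at \<open>\<wp>\<close>.
\<close>

definition lie_poly :: "complex \<Rightarrow> complex \<Rightarrow> complex poly \<Rightarrow> complex poly \<Rightarrow> complex poly" where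
  "lie_poly g2 g3 C A =
     [:- g3, - g2, 0, 4:] * pderiv (pderiv (pderiv A))
   + [:- 3 * g2 / 2, 0, 18:] * pderiv (pderiv A)
   + smult 4 ([:0, 3:] + C) * pderiv A
   + smult 2 (A * pderiv C)"

lemma poly_lie_poly: "poly (lie_poly g2 g3 C A) p = lie_expr g2 g3 C A p"
  unfolding lie_poly_def lie_expr_def
  by (simp add: algebra_simps power2_eq_square power3_eq_cube)

lemma lie_expr_eq_0_iff: "(\<forall>p. lie_expr g2 g3 C A p = 0) \<longleftrightarrow> lie_poly g2 g3 C A = 0"
  using poly_all_0_iff_0[of "lie_poly g2 g3 C A"] by (simp add: poly_lie_poly)

lemma coeff_lie_poly_potC:
  "coeff (lie_poly g2 g3 (potC n c0) A) k =
     2 * (2 * of_nat k + 1) * (of_nat k - of_nat n) * (of_nat k + of_nat n + 1) * coeff A k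
   + 4 * c0 * (of_nat k + 1) * coeff A (k + 1)
   - g2 * (of_nat k + 1) * (of_nat k + 2) * (2 * of_nat k + 3) / 2 * coeff A (k + 2)
   - g3 * (of_nat k + 1) * (of_nat k + 2) * (of_nat k + 3) * coeff A (k + 3)"
proof -
  consider "k = 0" | "k = 1" | "k = 2" | j where "k = Suc (Suc (Suc j))"
    by (metis One_nat_def Suc_1 not0_implies_Suc)
  then show ?thesis
    by cases
      (simp_all add: lie_poly_def potC_def coeff_pderiv pderiv_pCons field_simps eval_nat_numeral)
qed

lemma eq_0_iff_eq_divide_if_multiple:
  fixes x a :: "'a::field"
  assumes "K \<noteq> 0" "Q \<noteq> 0" "x = K * (N - Q * a)"
  shows "x = 0 \<longleftrightarrow> a = N / Q"
  using assms by (auto simp: eq_divide_eq algebra_simps)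

lemma coeff_lie_poly_potC_above_degree:
  assumes "degree A \<le> n" "n \<le> k"
  shows "coeff (lie_poly g2 g3 (potC n c0) A) k = 0"
  using assms by (cases "k = n") (simp_all add: coeff_lie_poly_potC coeff_eq_0)

lemma coeff_lie_poly_potC_n_minus_1:
  assumes "n \<ge> 1" "degree A \<le> n" "coeff A n = 1"
  shows "coeff (lie_poly g2 g3 (potC n c0) A) (n - 1) = 0 \<longleftrightarrow>
           coeff A (n - 1) = c0 / (2 * of_nat n - 1)"
proof (rule eq_0_iff_eq_divide_if_multiple[where K = "4 * of_nat n"])
  show "(2 * of_nat n - 1 :: complex) \<noteq> 0"
    using of_nat_eq_0_iff[of "2 * n - 1", where 'a=complex] assms(1) by (simp add: of_nat_diff)
  show "(4 * of_nat n :: complex) \<noteq> 0" using assms(1) by simp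
  show "coeff (lie_poly g2 g3 (potC n c0) A) (n - 1) =
          4 * of_nat n * (c0 - (2 * of_nat n - 1) * coeff A (n - 1))"
    using assms by (simp add: coeff_lie_poly_potC coeff_eq_0 of_nat_diff algebra_simps)
qed

lemma coeff_lie_poly_potC_n_minus_2:
  assumes "n \<ge> 2" "degree A \<le> n" "coeff A n = 1"
    and "coeff A (n - 1) = c0 / (2 * of_nat n - 1)"
  shows "coeff (lie_poly g2 g3 (potC n c0) A) (n - 2) = 0 \<longleftrightarrow>
           coeff A (n - 2) =
             ((8 * c0 ^ 2 - of_nat n * g2 * (2 * of_nat n - 1) ^ 2) * (of_nat n - 1))
             / (8 * (2 * of_nat n - 3) * (2 * of_nat n - 1) ^ 2)"
proof (rule eq_0_iff_eq_divide_if_multiple[where K = "1 / (2 * (2 * of_nat n - 1))"])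
  have nz: "(2 * of_nat n - 1 :: complex) \<noteq> 0" "(2 * of_nat n - 3 :: complex) \<noteq> 0"
    using of_nat_eq_0_iff[of "2 * n - 1", where 'a=complex]
      of_nat_eq_0_iff[of "2 * n - 3", where 'a=complex] assms(1) by (simp_all add: of_nat_diff)
  then show "(8 * (2 * of_nat n - 3) * (2 * of_nat n - 1) ^ 2 :: complex) \<noteq> 0" by simp
  show "1 / (2 * (2 * of_nat n - 1)) \<noteq> (0::complex)" using nz by simp
  obtain m where m: "n = m + 2" using assms(1) by (metis add.commute le_add_diff_inverse)
  have idx: "coeff A (m + 1) = c0 / (2 * of_nat n - 1)" "coeff A (m + 2) = 1" "coeff A (m + 3) = 0"
      "n - 2 = m" "(of_nat m :: complex) = of_nat n - 2"
    using assms m by (simp_all add: coeff_eq_0)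
  show "coeff (lie_poly g2 g3 (potC n c0) A) (n - 2) =
          1 / (2 * (2 * of_nat n - 1)) *
            ((8 * c0 ^ 2 - of_nat n * g2 * (2 * of_nat n - 1) ^ 2) * (of_nat n - 1)
             - 8 * (2 * of_nat n - 3) * (2 * of_nat n - 1) ^ 2 * coeff A (n - 2))"
    using nz unfolding coeff_lie_poly_potC idx
    by (simp add: field_simps) (simp add: algebra_simps power2_eq_square)
qed

lemma coeff_lie_poly_potC_recurrence:
  assumes "i + 3 \<le> n"
  shows "coeff (lie_poly g2 g3 (potC n c0) A) i = 0 \<longleftrightarrow> coeff A i =
                 (((2 * of_nat i ^ 2 + 10 * of_nat i + 12) * coeff A (i + 3) * g3
                   + (2 * of_nat i ^ 2 + 7 * of_nat i + 6) * coeff A (i + 2) * g2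
                   - 8 * c0 * coeff A (i + 1)) * (of_nat i + 1))
                 / (4 * (of_nat i + of_nat n + 1) * (2 * of_nat i + 1) * (of_nat i - of_nat n))"
proof (rule eq_0_iff_eq_divide_if_multiple[where K = "- 1 / 2"])
  show "(4 * (of_nat i + of_nat n + 1) * (2 * of_nat i + 1) * (of_nat i - of_nat n) :: complex) \<noteq> 0"
    using of_nat_eq_0_iff[of "2 * i + 1", where 'a=complex]
      of_nat_eq_0_iff[of "i + n + 1", where 'a=complex] assms unfolding mult_eq_0_iff de_Morgan_disj by (simp add: add_ac)
  show "- 1 / 2 \<noteq> (0::complex)" by simp
  show "coeff (lie_poly g2 g3 (potC n c0) A) i = - 1 / 2 *
          (((2 * of_nat i ^ 2 + 10 * of_nat i + 12) * coeff A (i + 3) * g3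
            + (2 * of_nat i ^ 2 + 7 * of_nat i + 6) * coeff A (i + 2) * g2
            - 8 * c0 * coeff A (i + 1)) * (of_nat i + 1)
           - 4 * (of_nat i + of_nat n + 1) * (2 * of_nat i + 1) * (of_nat i - of_nat n) * coeff A i)"
    by (simp add: coeff_lie_poly_potC field_simps) (simp add: algebra_simps power2_eq_square)
qed

lemma lie_poly_potC_eq_0_iff:
  assumes "n \<ge> 1" "degree A \<le> n" "coeff A n = 1"
  shows "lie_poly g2 g3 (potC n c0) A = 0 \<longleftrightarrow>
           (coeff A (n - 1) = c0 / (2 * of_nat n - 1)
            \<and> (n \<ge> 2 \<longrightarrow> coeff A (n - 2) =
                 ((8 * c0 ^ 2 - of_nat n * g2 * (2 * of_nat n - 1) ^ 2) * (of_nat n - 1))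
                 / (8 * (2 * of_nat n - 3) * (2 * of_nat n - 1) ^ 2))
            \<and> (\<forall>i. i + 3 \<le> n \<longrightarrow> coeff A i =
                 (((2 * of_nat i ^ 2 + 10 * of_nat i + 12) * coeff A (i + 3) * g3
                   + (2 * of_nat i ^ 2 + 7 * of_nat i + 6) * coeff A (i + 2) * g2
                   - 8 * c0 * coeff A (i + 1)) * (of_nat i + 1))
                 / (4 * (of_nat i + of_nat n + 1) * (2 * of_nat i + 1) * (of_nat i - of_nat n))))"
    (is "_ \<longleftrightarrow> ?top \<and> ?next \<and> ?recurrence")
proof -
  let ?L = "lie_poly g2 g3 (potC n c0) A"
  have "?L = 0 \<longleftrightarrow> (\<forall>k. coeff ?L k = 0)"
    by (simp add: poly_eq_iff)
  also have "\<dots> \<longleftrightarrow> ?top \<and> ?next \<and> ?recurrence"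
  proof
    assume L: "\<forall>k. coeff ?L k = 0"
    then have ?top
      using coeff_lie_poly_potC_n_minus_1[OF assms] by blast
    moreover from this have ?next
      using L coeff_lie_poly_potC_n_minus_2[OF _ assms(2,3)] by blast
    moreover have ?recurrence
      using L coeff_lie_poly_potC_recurrence by blast
    ultimately show "?top \<and> ?next \<and> ?recurrence" by blast
  next
    assume coeffs: "?top \<and> ?next \<and> ?recurrence"
    show "\<forall>k. coeff ?L k = 0"
    proof
      fix k
      consider "n \<le> k" | "k = n - 1" | "n \<ge> 2" "k = n - 2" | "k + 3 \<le> n"
        using assms(1) by linarith
      then show "coeff ?L k = 0"
      proof cases
        case 1
        then show ?thesis using coeff_lie_poly_potC_above_degree[OF assms(2)] by blast
      next
        case 2
        then show ?thesis using coeffs coeff_lie_poly_potC_n_minus_1[OF assms] by blast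
      next
        case 3
        then show ?thesis using coeffs coeff_lie_poly_potC_n_minus_2[OF _ assms(2,3)] by blast
      next
        case 4
        then show ?thesis using coeffs coeff_lie_poly_potC_recurrence by blast
      qed
    qed
  qed
  finally show ?thesis .
qed

lemma DERIV_deriv_within_open:
  assumes "open S" "x \<in> S" "\<And>y. y \<in> S \<Longrightarrow> (f has_field_derivative f' y) (at y)"
    and "(f' has_field_derivative D) (at x)"
  shows "(deriv f has_field_derivative D) (at x)"
proof (rule has_field_derivative_transform_within_open[OF assms(4,1,2)])
  show "f' y = deriv f y" if "y \<in> S" for y
    using DERIV_imp_deriv[OF assms(3)[OF that]] by simp
qed

lemma lie_operator_comp_weierstrass:
  fixes wp :: "complex \<Rightarrow> complex" and C A :: "complex poly"
  assumes S: "open S" and hol: "wp holomorphic_on S"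
    and weierstrass: "\<forall>y\<in>S. (deriv wp y) ^ 2 = 4 * wp y ^ 3 - g2 * wp y - g3"
    and weierstrass': "\<forall>y\<in>S. deriv (deriv wp) y = 6 * wp y ^ 2 - g2 / 2"
    and x: "x \<in> S"
  shows "deriv (deriv (deriv (\<lambda>y. poly A (wp y)))) x
           + 4 * poly C (wp x) * deriv (\<lambda>y. poly A (wp y)) x
           + 2 * deriv (\<lambda>y. poly C (wp y)) x * poly A (wp x)
         = deriv wp x * lie_expr g2 g3 C A (wp x)"
proof -
  define w' where "w' = deriv wp"
  define A1 where "A1 = pderiv A"
  define A2 where "A2 = pderiv A1"
  define A3 where "A3 = pderiv A2"
  have dwp: "(wp has_field_derivative w' y) (at y)" if "y \<in> S" for y
    unfolding w'_def using holomorphic_derivI[OF hol S that] .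
  have dw': "(w' has_field_derivative 6 * wp y ^ 2 - g2 / 2) (at y)" if "y \<in> S" for y
    using holomorphic_derivI[OF holomorphic_deriv[OF hol S] S that] weierstrass' that
    unfolding w'_def by simp
  define h1 where "h1 y = w' y * poly A1 (wp y)" for y
  define h2 where
    "h2 y = (6 * wp y ^ 2 - g2 / 2) * poly A1 (wp y) + w' y ^ 2 * poly A2 (wp y)" for y
  define h3 where "h3 y = 12 * wp y * w' y * poly A1 (wp y)
      + 3 * (6 * wp y ^ 2 - g2 / 2) * w' y * poly A2 (wp y) + w' y ^ 3 * poly A3 (wp y)" for y
  have dA: "((\<lambda>y. poly A (wp y)) has_field_derivative h1 y) (at y)" if "y \<in> S" for y
    unfolding h1_def A1_def using dwp[OF that] by (auto intro!: derivative_eq_intros)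
  have dh1: "(h1 has_field_derivative h2 y) (at y)" if "y \<in> S" for y
    unfolding h1_def h2_def A2_def using dwp[OF that] dw'[OF that]
    by (auto intro!: derivative_eq_intros simp: power2_eq_square algebra_simps)
  have dh2: "(h2 has_field_derivative h3 y) (at y)" if "y \<in> S" for y
    unfolding h2_def h3_def A2_def A3_def using dwp[OF that] dw'[OF that]
    by (auto intro!: derivative_eq_intros simp: power2_eq_square power3_eq_cube algebra_simps)
  have "deriv (deriv (deriv (\<lambda>y. poly A (wp y)))) x = h3 x"
    using DERIV_deriv_within_open[OF S _ dA dh1] DERIV_deriv_within_open[OF S x _ dh2[OF x]]
    by (intro DERIV_imp_deriv) blast
  moreover have "deriv (\<lambda>y. poly A (wp y)) x = h1 x"
    using dA[OF x] by (rule DERIV_imp_deriv)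
  moreover have "deriv (\<lambda>y. poly C (wp y)) x = w' x * poly (pderiv C) (wp x)"
    using dwp[OF x] by (intro DERIV_imp_deriv) (auto intro!: derivative_eq_intros)
  moreover have "4 * wp x ^ 3 - g2 * wp x - g3 = w' x ^ 2"
    using weierstrass x unfolding w'_def by simp
  ultimately show ?thesis
    unfolding lie_expr_def h1_def h3_def A1_def A2_def A3_def w'_def[symmetric]
    by (simp add: field_simps power2_eq_square power3_eq_cube)
qed

theorem theorem5:
  fixes n :: nat and c0 g2 g3 :: complex and A :: "complex poly"
  assumes "n \<ge> 1" and "degree A = n" and "coeff A n = 1"
  shows "((\<forall>p. lie_expr g2 g3 (potC n c0) A p = 0) \<longleftrightarrow>
           (coeff A (n - 1) = c0 / (2 * of_nat n - 1)
            \<and> (n \<ge> 2 \<longrightarrow> coeff A (n - 2) =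
                 ((8 * c0 ^ 2 - of_nat n * g2 * (2 * of_nat n - 1) ^ 2) * (of_nat n - 1))
                 / (8 * (2 * of_nat n - 3) * (2 * of_nat n - 1) ^ 2))
            \<and> (\<forall>i. i + 3 \<le> n \<longrightarrow> coeff A i =
                 (((2 * of_nat i ^ 2 + 10 * of_nat i + 12) * coeff A (i + 3) * g3
                   + (2 * of_nat i ^ 2 + 7 * of_nat i + 6) * coeff A (i + 2) * g2
                   - 8 * c0 * coeff A (i + 1)) * (of_nat i + 1))
                 / (4 * (of_nat i + of_nat n + 1) * (2 * of_nat i + 1) * (of_nat i - of_nat n)))))
       \<and> ((\<forall>p. lie_expr g2 g3 (potC n c0) A p = 0) \<longrightarrow>
           (\<forall>(S :: complex set) (wp :: complex \<Rightarrow> complex).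
              open S \<and> wp holomorphic_on S
              \<and> (\<forall>x\<in>S. (deriv wp x) ^ 2 = 4 * wp x ^ 3 - g2 * wp x - g3)
              \<and> (\<forall>x\<in>S. deriv (deriv wp) x = 6 * wp x ^ 2 - g2 / 2)
              \<longrightarrow> (\<forall>x\<in>S.
                    deriv (deriv (deriv (\<lambda>y. poly A (wp y)))) x
                    + 4 * poly (potC n c0) (wp x) * deriv (\<lambda>y. poly A (wp y)) x
                    + 2 * deriv (\<lambda>y. poly (potC n c0) (wp y)) x * poly A (wp x) = 0)))"
proof -
  have "degree A \<le> n" using assms(2) by simp
  note coefficients = lie_poly_potC_eq_0_iff[OF assms(1) this assms(3), folded lie_expr_eq_0_iff]
  show ?thesis
    by (intro conjI impI allI ballI, rule coefficients, elim conjE,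
        subst lie_operator_comp_weierstrass[of _ _ g2 g3], simp_all)
qed

end
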